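(* Let $\langle A,g\rangle$ be an interior algebra. If $A^*$ is a retract of $A$, then $A=A^*$.
   Context: An interior algebra is a Boolean algebra with an operator $g$ satisfying $g(1)=1$, $g(xy)=g(x)g(y)$, $g(x)\le x$, $gg(x)=g(x)$; $a$ is open if $g(a)=a$. $A^*$ denotes the subalgebra of $A$ generated by the open elements of $A$. $A^*$ is a retract of $A$ if there is a surjective homomorphism $p\colon A\to A^*$ whose restriction to $A^*$ is the identity. *)

theory Defs
  imports Main
begin

definition interior_algebra :: "('a::boolean_algebra \<Rightarrow> 'a) \<Rightarrow> bool" where
  "interior_algebra g \<longleftrightarrow>
     g top = top \<and>
     (\<forall>x y. g (inf x y) = inf (g x) (g y)) \<and>
     (\<forall>x. g x \<le> x) \<and>
     (\<forall>x. g (g x) = g x)"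

inductive_set star_alg :: "('a::boolean_algebra \<Rightarrow> 'a) \<Rightarrow> 'a set" for g where
  open_in: "g a = a \<Longrightarrow> a \<in> star_alg g"
| bot_in: "bot \<in> star_alg g"
| top_in: "top \<in> star_alg g"
| sup_in: "x \<in> star_alg g \<Longrightarrow> y \<in> star_alg g \<Longrightarrow> sup x y \<in> star_alg g"
| inf_in: "x \<in> star_alg g \<Longrightarrow> y \<in> star_alg g \<Longrightarrow> inf x y \<in> star_alg g"
| compl_in: "x \<in> star_alg g \<Longrightarrow> - x \<in> star_alg g"

definition star_retraction :: "('a::boolean_algebra \<Rightarrow> 'a) \<Rightarrow> ('a \<Rightarrow> 'a) \<Rightarrow> bool" where
  "star_retraction g p \<longleftrightarrow>
     (\<forall>x. p x \<in> star_alg g) \<and>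
     p ` UNIV = star_alg g \<and>
     (\<forall>x y. p (sup x y) = sup (p x) (p y)) \<and>
     (\<forall>x y. p (inf x y) = inf (p x) (p y)) \<and>
     (\<forall>x. p (- x) = - p x) \<and>
     p bot = bot \<and> p top = top \<and>
     (\<forall>x. p (g x) = g (p x)) \<and>
     (\<forall>y \<in> star_alg g. p y = y)"

end

theory Submission
  imports Defs
begin

text \<open>A retraction onto the Boolean subalgebra generated by the open elements has trivial kernel:
  if \<open>p d = \<bottom>\<close>, the open element \<open>g (- d)\<close> is fixed by \<open>p\<close>, yet
  \<open>p (g (- d)) = g (p (- d)) = g \<top> = \<top>\<close>; so \<open>g (- d) = \<top>\<close>, hence \<open>- d = \<top>\<close>.
  Applied to the symmetric difference of \<open>x\<close> and \<open>p x\<close>, which \<open>p\<close> sends to \<open>\<bottom>\<close>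
  since \<open>p\<close> is idempotent, this forces \<open>p x = x\<close>.\<close>

lemma star_retraction_idem:
  assumes "star_retraction g p"
  shows "p (p x) = p x"
  using assms unfolding star_retraction_def by blast

lemma star_retraction_eq_bot:
  assumes "interior_algebra g" and "star_retraction g p" and "p d = bot"
  shows "d = bot"
proof -
  have g_top: "g top = top" and g_le: "g (- d) \<le> - d" and g_idem: "g (g (- d)) = g (- d)"
    using assms(1) unfolding interior_algebra_def by auto
  have "g (- d) = p (g (- d))"
    using assms(2) g_idem star_alg.open_in unfolding star_retraction_def by metis
  also have "\<dots> = g (p (- d))"
    using assms(2) unfolding star_retraction_def by blast
  also have "\<dots> = top"
    using assms(2,3) g_top unfolding star_retraction_def by simp
  finally have "- d = top"
    using g_le top.extremum_uniqueI by metis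
  then show "d = bot"
    using compl_eq_compl_iff by fastforce
qed

lemma star_retraction_eq_id:
  assumes "interior_algebra g" and "star_retraction g p"
  shows "p x = x"
proof -
  have hom: "p (sup (x - p x) (p x - x)) = sup (p x - p (p x)) (p (p x) - p x)"
    using assms(2) unfolding star_retraction_def diff_eq by simp
  have "p (sup (x - p x) (p x - x)) = bot"
    using hom star_retraction_idem [OF assms(2)] by simp
  then have "sup (x - p x) (p x - x) = bot"
    by (rule star_retraction_eq_bot [OF assms])
  then show "p x = x"
    by (simp add: diff_shunt_var order.antisym)
qed

theorem lemma4p4:
  fixes g :: "'a::boolean_algebra \<Rightarrow> 'a"
  assumes "interior_algebra g"
    and "\<exists>p. star_retraction g p"
  shows "star_alg g = UNIV"
proof -
  obtain p where p: "star_retraction g p"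
    using assms(2) by blast
  have "x \<in> star_alg g" for x
    using star_retraction_eq_id [OF assms(1) p, of x] p unfolding star_retraction_def by metis
  then show ?thesis
    by blast
qed

end
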